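(* Let $q$ be odd, $q\ne9$, and $V$ an $n$-dimensional space ($n\ge4$) over $\mathbb{F}_q$ with a non-degenerate alternating form $f$, $G=\mathrm{Sp}(V)$ and $\mathcal T$ the set of transvections of $G$. Let $X\subseteq G$ be a generating set of $G$ consisting of $1$ and transvections, which is $\mathbb{F}_q$-closed, such that ${}_VX$ spans $V$, $X_{V^*}$ spans $V^*$, $\Gamma(X)$ is strongly connected, and the directed diameter of $\Gamma(X'')$ is at most $2$ for every $X\setminus\{1\}\subseteq X''\subseteq\mathcal T$. Let $c\ge1$ be an absolute constant such that for every such $V,X$ and all nonzero $a,b\in V$ with $T_a\cup T_b\subseteq X$ and $a+b\ne0$ one has $\ell_X(T_{a+b})\le c$ (such a constant exists). Then $\ell_X(\mathcal T)\le c\,n^{\log_2 c}$. Moreover, $\ell_X(\mathcal T)\le 21n^{4.4}$.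
   Context: Transvections $s=1+u\otimes\phi$ ($x\mapsto x+\phi(x)u$, $\phi(u)=0$); $s^\lambda=1+\lambda u\otimes\phi$; $X$ is $\mathbb{F}_q$-closed if $s^\lambda\in X$ for all $s\in X$, $\lambda\in\mathbb{F}_q^\times$. ${}_VX$, $X_{V^*}$: the sets of $u$, resp. $\phi$, occurring in elements of $X$. $\Gamma(Y)$: directed graph on $Y$ with an edge from $1+u\otimes\phi$ to $1+v\otimes\psi$ iff $\psi(u)\ne0$. For $0\ne v\in V$, $\varphi_v(x)=f(v,x)$ and $T_v=\{1+\lambda v\otimes\varphi_v:\lambda\in\mathbb{F}_q\}$. $\ell_X(Y)=\min\{k:Y\subseteq(X\cup X^{-1}\cup\{1\})^k\}$. *)

theory Defs
  imports "HOL-Analysis.Analysis" "Jordan_Normal_Form.VS_Connect"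
begin

text \<open>The space V is F_q^n (column vectors of dimension n), the alternating form is
  f(x,y) = x . (J y) for an n x n matrix J.
  A linear functional phi is represented by a vector phi, acting as x |-> phi . x.\<close>

definition alternating_form :: "nat \<Rightarrow> 'a::field mat \<Rightarrow> bool" where
  "alternating_form n J \<longleftrightarrow> J \<in> carrier_mat n n \<and>
     (\<forall>x \<in> carrier_vec n. x \<bullet> (J *\<^sub>v x) = 0)"

definition nondegenerate_form :: "nat \<Rightarrow> 'a::field mat \<Rightarrow> bool" where
  "nondegenerate_form n J \<longleftrightarrow> J \<in> carrier_mat n n \<and>
     (\<forall>x \<in> carrier_vec n. (\<forall>y \<in> carrier_vec n. x \<bullet> (J *\<^sub>v y) = 0) \<longrightarrow> x = 0\<^sub>v n)"

definition Sp :: "nat \<Rightarrow> 'a::field mat \<Rightarrow> 'a mat set" where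
  "Sp n J = {A \<in> carrier_mat n n. invertible_mat A \<and>
     (\<forall>x \<in> carrier_vec n. \<forall>y \<in> carrier_vec n.
        (A *\<^sub>v x) \<bullet> (J *\<^sub>v (A *\<^sub>v y)) = x \<bullet> (J *\<^sub>v y))}"

definition tv :: "nat \<Rightarrow> 'a::field vec \<Rightarrow> 'a vec \<Rightarrow> 'a mat" where
  "tv n u phi = 1\<^sub>m n + mat n n (\<lambda>(i,j). u $ i * phi $ j)"

definition is_tv_rep :: "nat \<Rightarrow> 'a::field mat \<Rightarrow> 'a vec \<Rightarrow> 'a vec \<Rightarrow> bool" where
  "is_tv_rep n s u phi \<longleftrightarrow> u \<in> carrier_vec n \<and> phi \<in> carrier_vec n \<and>
     u \<noteq> 0\<^sub>v n \<and> phi \<noteq> 0\<^sub>v n \<and> phi \<bullet> u = 0 \<and> s = tv n u phi"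

definition transvections :: "nat \<Rightarrow> 'a::field mat \<Rightarrow> 'a mat set" where
  "transvections n J = {s \<in> Sp n J. \<exists>u phi. is_tv_rep n s u phi}"

definition V_part :: "nat \<Rightarrow> 'a::field mat set \<Rightarrow> 'a vec set" where
  "V_part n X = {u. \<exists>s\<in>X. \<exists>phi. is_tv_rep n s u phi}"

definition Vdual_part :: "nat \<Rightarrow> 'a::field mat set \<Rightarrow> 'a vec set" where
  "Vdual_part n X = {phi. \<exists>s\<in>X. \<exists>u. is_tv_rep n s u phi}"

definition spans :: "nat \<Rightarrow> 'a::field vec set \<Rightarrow> bool" where
  "spans n S \<longleftrightarrow> module.span class_ring (module_vec TYPE('a) n) S = carrier_vec n"

definition Fq_closed :: "nat \<Rightarrow> 'a::field mat set \<Rightarrow> bool" where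
  "Fq_closed n X \<longleftrightarrow> (\<forall>s\<in>X. \<forall>u phi. is_tv_rep n s u phi \<longrightarrow>
     (\<forall>t::'a. t \<noteq> 0 \<longrightarrow> tv n (t \<cdot>\<^sub>v u) phi \<in> X))"

definition gamma_edge :: "nat \<Rightarrow> 'a::field mat \<Rightarrow> 'a mat \<Rightarrow> bool" where
  "gamma_edge n s t \<longleftrightarrow> (\<exists>u phi v psi. is_tv_rep n s u phi \<and> is_tv_rep n t v psi \<and> psi \<bullet> u \<noteq> 0)"

definition gamma_vertices :: "nat \<Rightarrow> 'a::field mat set \<Rightarrow> 'a mat set" where
  "gamma_vertices n Y = {s \<in> Y. \<exists>u phi. is_tv_rep n s u phi}"

definition strongly_connected_gamma :: "nat \<Rightarrow> 'a::field mat set \<Rightarrow> bool" where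
  "strongly_connected_gamma n Y \<longleftrightarrow>
     (\<forall>s \<in> gamma_vertices n Y. \<forall>t \<in> gamma_vertices n Y.
        (s, t) \<in> {(a, b). a \<in> gamma_vertices n Y \<and> b \<in> gamma_vertices n Y \<and> gamma_edge n a b}\<^sup>*)"

definition diam_le_2_gamma :: "nat \<Rightarrow> 'a::field mat set \<Rightarrow> bool" where
  "diam_le_2_gamma n Y \<longleftrightarrow>
     (\<forall>s \<in> gamma_vertices n Y. \<forall>t \<in> gamma_vertices n Y.
        s = t \<or> gamma_edge n s t \<or> (\<exists>w \<in> gamma_vertices n Y. gamma_edge n s w \<and> gamma_edge n w t))"

fun setpow :: "nat \<Rightarrow> 'a::field mat set \<Rightarrow> nat \<Rightarrow> 'a mat set" where
  "setpow n S 0 = {1\<^sub>m n}"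
| "setpow n S (Suc k) = {A * B | A B. A \<in> S \<and> B \<in> setpow n S k}"

definition inv_set :: "nat \<Rightarrow> 'a::field mat set \<Rightarrow> 'a mat set" where
  "inv_set n X = {B \<in> carrier_mat n n. \<exists>A \<in> X. A * B = 1\<^sub>m n \<and> B * A = 1\<^sub>m n}"

definition sym_gens :: "nat \<Rightarrow> 'a::field mat set \<Rightarrow> 'a mat set" where
  "sym_gens n X = X \<union> inv_set n X \<union> {1\<^sub>m n}"

definition generates :: "nat \<Rightarrow> 'a::field mat \<Rightarrow> 'a mat set \<Rightarrow> bool" where
  "generates n J X \<longleftrightarrow> Sp n J \<subseteq> (\<Union>k. setpow n (sym_gens n X) k)"

definition word_len :: "nat \<Rightarrow> 'a::field mat set \<Rightarrow> 'a mat set \<Rightarrow> nat" where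
  "word_len n X Y = (LEAST k. Y \<subseteq> setpow n (sym_gens n X) k)"

text \<open>T_v = {1 + lambda v (x) phi_v : lambda in F_q}, phi_v(x) = f(v,x) = (J^T v) . x.\<close>
definition T_set :: "nat \<Rightarrow> 'a::field mat \<Rightarrow> 'a vec \<Rightarrow> 'a mat set" where
  "T_set n J v = {tv n (t \<cdot>\<^sub>v v) (transpose_mat J *\<^sub>v v) | t. True}"

definition admissible :: "nat \<Rightarrow> 'a::field mat \<Rightarrow> 'a mat set \<Rightarrow> bool" where
  "admissible n J X \<longleftrightarrow>
     4 \<le> n \<and> alternating_form n J \<and> nondegenerate_form n J \<and>
     X \<subseteq> Sp n J \<and> 1\<^sub>m n \<in> X \<and> X - {1\<^sub>m n} \<subseteq> transvections n J \<and>
     generates n J X \<and> Fq_closed n X \<and>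
     spans n (V_part n X) \<and> spans n (Vdual_part n X) \<and>
     strongly_connected_gamma n X \<and>
     (\<forall>X''. X - {1\<^sub>m n} \<subseteq> X'' \<and> X'' \<subseteq> transvections n J \<longrightarrow> diam_le_2_gamma n X'')"

definition sum_hyp :: "'a::field itself \<Rightarrow> real \<Rightarrow> bool" where
  "sum_hyp TYPE('a) c \<longleftrightarrow>
     (\<forall>n (J::'a mat) X. admissible n J X \<longrightarrow>
        (\<forall>a \<in> carrier_vec n. \<forall>b \<in> carrier_vec n.
           a \<noteq> 0\<^sub>v n \<longrightarrow> b \<noteq> 0\<^sub>v n \<longrightarrow> a + b \<noteq> 0\<^sub>v n \<longrightarrow>
           T_set n J a \<union> T_set n J b \<subseteq> X \<longrightarrow>
           real (word_len n X (T_set n J (a + b))) \<le> c))"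

end

theory Submission
  imports Defs
begin

text \<open>Every transvection of \<open>Sp(V)\<close> has the form \<open>1 + t v \<otimes> \<phi>\<^sub>v\<close>, so it lies in \<open>T\<^sub>v\<close> for some
  \<open>v \<noteq> 0\<close>, and \<open>v\<close> is a sum of at most \<open>n \<le> 2\<^sup>k\<close> vectors of \<open>\<^sub>VX\<close>, whose groups \<open>T\<close> lie in \<open>X\<close>.
  Split such a sum into two halves \<open>v = v\<^sub>1 + v\<^sub>2\<close>. Adjoining \<open>T\<^sub>v\<^sub>1 \<union> T\<^sub>v\<^sub>2\<close> to \<open>X\<close> preserves all
  hypotheses, so by the sum hypothesis \<open>T\<^sub>v\<close> has length at most \<open>c\<close> over the enlarged set;
  if \<open>T\<^sub>v\<^sub>1\<close> and \<open>T\<^sub>v\<^sub>2\<close> have length at most \<open>L\<close> over \<open>X\<close>, then \<open>T\<^sub>v\<close> has length at most \<open>c L\<close>.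
  Recursion of depth \<open>k = \<lceil>log\<^sub>2 n\<rceil>\<close> gives \<open>c\<^sup>k \<le> c n\<^bsup>log\<^sub>2 c\<^esup>\<close>.

  For the explicit bound one may take \<open>c = 17\<close>: the commutation rule
  \<open>x\<^sub>z(r) x\<^sub>v(t) x\<^sub>z(-r) = x\<^bsub>v + r f(z,v) z\<^esub>(t)\<close> obtains \<open>T\<^bsub>v + \<kappa> z\<^esub>\<close> from \<open>T\<^sub>z\<close> and \<open>T\<^sub>v\<close> whenever
  \<open>f(z,v) \<noteq> 0\<close>, and when \<open>f(a,b) = 0\<close> the diameter hypothesis supplies common neighbours
  through which \<open>T\<^bsub>a+b\<^esub>\<close> is reached in a bounded number of such steps. This works for every
  odd \<open>q\<close>.\<close>

unbundle no vec_syntax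
no_notation inner (infix "\<bullet>" 70)

section \<open>Rank-one perturbations of the identity\<close>

lemma tv_carrier [simp]: "tv n u phi \<in> carrier_mat n n"
  by (simp add: tv_def)

lemma tv_dims [simp]: "dim_row (tv n u phi) = n" "dim_col (tv n u phi) = n"
  by (simp_all add: tv_def)

lemma index_tv: "i < n \<Longrightarrow> j < n \<Longrightarrow>
   tv n u phi $$ (i,j) = (if i = j then 1 else 0) + u $ i * phi $ j"
  by (simp add: tv_def)

lemma tv_mult_vec:
  fixes u :: "'a::field vec"
  assumes u: "u \<in> carrier_vec n" and p: "phi \<in> carrier_vec n" and x: "x \<in> carrier_vec n"
  shows "tv n u phi *\<^sub>v x = x + (phi \<bullet> x) \<cdot>\<^sub>v u"
proof (rule eq_vecI)
  show "dim_vec (tv n u phi *\<^sub>v x) = dim_vec (x + (phi \<bullet> x) \<cdot>\<^sub>v u)" using u x by simp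
  fix i assume "i < dim_vec (x + (phi \<bullet> x) \<cdot>\<^sub>v u)"
  hence i: "i < n" using u x by simp
  have "(tv n u phi *\<^sub>v x) $ i = row (tv n u phi) i \<bullet> x" using i by simp
  also have "\<dots> = (\<Sum>j\<in>{0..<n}. ((if i = j then 1 else 0) + u $ i * phi $ j) * x $ j)"
    unfolding scalar_prod_def using i x by (intro sum.cong) (auto simp: index_tv)
  also have "\<dots> = (\<Sum>j\<in>{0..<n}. (if i = j then 1 else 0) * x $ j) + u $ i * (\<Sum>j\<in>{0..<n}. phi $ j * x $ j)"
    by (simp add: distrib_right sum.distrib sum_distrib_left mult.assoc)
  also have "(\<Sum>j\<in>{0..<n}. (if i = j then 1 else 0) * x $ j) = (\<Sum>j\<in>{0..<n}. if i = j then x $ j else 0)"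
    by (intro sum.cong) auto
  also have "(\<Sum>j\<in>{0..<n}. if i = j then x $ j else 0) = x $ i" using i by simp
  also have "(\<Sum>j\<in>{0..<n}. phi $ j * x $ j) = phi \<bullet> x" unfolding scalar_prod_def using x by simp
  finally show "(tv n u phi *\<^sub>v x) $ i = (x + (phi \<bullet> x) \<cdot>\<^sub>v u) $ i"
    using i u x by (simp add: mult.commute)
qed

lemma eq_mat_by_mult_vec:
  fixes A :: "'a::field mat"
  assumes A: "A \<in> carrier_mat n n" and B: "B \<in> carrier_mat n n"
    and eq: "\<And>x. x \<in> carrier_vec n \<Longrightarrow> A *\<^sub>v x = B *\<^sub>v x"
  shows "A = B"
proof (rule eq_matI)
  fix i j assume "i < dim_row B" and "j < dim_col B"
  hence i: "i < n" and j: "j < n" using B by auto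
  have "A $$ (i,j) = (A *\<^sub>v unit_vec n j) $ i" using A i j by simp
  also have "\<dots> = (B *\<^sub>v unit_vec n j) $ i" using eq[of "unit_vec n j"] by simp
  also have "\<dots> = B $$ (i,j)" using B i j by simp
  finally show "A $$ (i,j) = B $$ (i,j)" .
qed (use A B in auto)

lemma vec_nonzero_index:
  fixes u :: "'a::zero vec"
  assumes "u \<in> carrier_vec n" "u \<noteq> 0\<^sub>v n"
  obtains i where "i < n" "u $ i \<noteq> 0"
  using assms by (metis carrier_vecD eq_vecI index_zero_vec(1) index_zero_vec(2))

lemma smult_vec_eq_zero:
  fixes a :: "'a::field vec"
  assumes "a \<in> carrier_vec n" "\<sigma> \<noteq> 0" "\<sigma> \<cdot>\<^sub>v a = 0\<^sub>v n"
  shows "a = 0\<^sub>v n"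
proof (rule eq_vecI)
  fix i assume "i < dim_vec (0\<^sub>v n :: 'a vec)"
  hence i: "i < n" by simp
  have "\<sigma> * a $ i = 0" using arg_cong[OF assms(3), of "\<lambda>w. w $ i"] assms(1) i by simp
  thus "a $ i = 0\<^sub>v n $ i" using assms(2) i by simp
qed (use assms in simp)

lemma add_eq_smult_imp_eq_smult:
  fixes a :: "'a::field vec"
  assumes a: "a \<in> carrier_vec n" and b: "b \<in> carrier_vec n" and e: "a + b = c \<cdot>\<^sub>v a"
  shows "b = (c - 1) \<cdot>\<^sub>v a"
proof (rule eq_vecI)
  fix i assume "i < dim_vec ((c - 1) \<cdot>\<^sub>v a)"
  hence i: "i < n" using a by simp
  have "(a + b) $ i = (c \<cdot>\<^sub>v a) $ i" using e by simp
  thus "b $ i = ((c - 1) \<cdot>\<^sub>v a) $ i" using a b i by (simp add: algebra_simps)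
qed (use a b in simp)

lemma tv_eq_imp_index_eq:
  fixes u :: "'a::field vec"
  assumes "tv n u phi = tv n u' phi'" "i < n" "j < n"
  shows "u $ i * phi $ j = u' $ i * phi' $ j"
  using arg_cong[OF assms(1), of "\<lambda>A. A $$ (i,j)"] assms(2,3) by (simp add: index_tv)

lemma is_tv_rep_one_False:
  fixes u :: "'a::field vec"
  assumes "is_tv_rep n (1\<^sub>m n) u phi"
  shows False
proof -
  from assms have u: "u \<in> carrier_vec n" "u \<noteq> 0\<^sub>v n" and p: "phi \<in> carrier_vec n" "phi \<noteq> 0\<^sub>v n"
    and e: "tv n u phi = 1\<^sub>m n" unfolding is_tv_rep_def by auto
  obtain i where i: "i < n" "u $ i \<noteq> 0" using vec_nonzero_index[OF u] by blast
  obtain j where j: "j < n" "phi $ j \<noteq> 0" using vec_nonzero_index[OF p] by blast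
  have "(if i = j then 1 else 0) + u $ i * phi $ j = (if i = j then 1 else 0)"
    using arg_cong[OF e, of "\<lambda>A. A $$ (i,j)"] i j by (simp add: index_tv)
  thus False using i j by simp
qed

lemma tv_eq_smult_cong:
  fixes u :: "'a::field vec"
  assumes e: "tv n u phi = tv n u' phi'"
    and c: "u \<in> carrier_vec n" "u' \<in> carrier_vec n" "phi \<in> carrier_vec n" "phi' \<in> carrier_vec n"
  shows "tv n (t \<cdot>\<^sub>v u) phi = tv n (t \<cdot>\<^sub>v u') phi'"
proof (rule eq_matI)
  fix i j assume "i < dim_row (tv n (t \<cdot>\<^sub>v u') phi')" "j < dim_col (tv n (t \<cdot>\<^sub>v u') phi')"
  hence ij: "i < n" "j < n" by auto
  show "tv n (t \<cdot>\<^sub>v u) phi $$ (i, j) = tv n (t \<cdot>\<^sub>v u') phi' $$ (i, j)"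
    using tv_eq_imp_index_eq[OF e ij] ij c by (simp add: index_tv mult.assoc)
qed auto

section \<open>Products of sets of matrices and word length\<close>

lemma setpow_carrier:
  assumes "S \<subseteq> carrier_mat n n"
  shows "setpow n S k \<subseteq> carrier_mat n n"
  by (induction k) (use assms in \<open>auto intro: mult_carrier_mat\<close>)

lemma setpow_mult:
  assumes S: "S \<subseteq> carrier_mat n n" and A: "A \<in> setpow n S a" and B: "B \<in> setpow n S b"
  shows "A * B \<in> setpow n S (a + b)"
  using A
proof (induction a arbitrary: A)
  case 0
  have "B \<in> carrier_mat n n" using setpow_carrier[OF S] B by blast
  thus ?case using 0 B by simp
next
  case (Suc a)
  then obtain A1 A2 where A: "A = A1 * A2" "A1 \<in> S" "A2 \<in> setpow n S a" by auto
  have "A1 \<in> carrier_mat n n" "A2 \<in> carrier_mat n n" "B \<in> carrier_mat n n"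
    using A S setpow_carrier[OF S] B by blast+
  hence "A * B = A1 * (A2 * B)" using A by simp
  moreover have "A2 * B \<in> setpow n S (a + b)" using Suc.IH A by blast
  ultimately show ?case using A by auto
qed

lemma one_mem_setpow:
  assumes "1\<^sub>m n \<in> S"
  shows "1\<^sub>m n \<in> setpow n S k"
  by (induction k) (use assms in \<open>auto intro!: exI[of _ "1\<^sub>m n"]\<close>)

lemma setpow_mono:
  assumes S: "S \<subseteq> carrier_mat n n" and one: "1\<^sub>m n \<in> S" and ab: "a \<le> b"
  shows "setpow n S a \<subseteq> setpow n S b"
proof
  fix A assume A: "A \<in> setpow n S a"
  have "1\<^sub>m n * A \<in> setpow n S (b - a + a)"
    using setpow_mult[OF S one_mem_setpow[OF one] A] .
  moreover have "A \<in> carrier_mat n n" using setpow_carrier[OF S] A by blast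
  ultimately show "A \<in> setpow n S b" using ab by simp
qed

lemma setpow_mono_set: "S \<subseteq> S' \<Longrightarrow> setpow n S k \<subseteq> setpow n S' k"
  by (induction k) auto

lemma subset_setpow_1:
  assumes "S \<subseteq> carrier_mat n n"
  shows "S \<subseteq> setpow n S 1"
proof
  fix A assume "A \<in> S"
  moreover hence "A = A * 1\<^sub>m n" using assms by auto
  ultimately show "A \<in> setpow n S 1" by fastforce
qed

lemma setpow_subset_setpow_mult:
  assumes S: "S \<subseteq> carrier_mat n n" and S': "S' \<subseteq> setpow n S L"
  shows "setpow n S' k \<subseteq> setpow n S (k * L)"
proof (induction k)
  case (Suc k)
  show ?case
  proof
    fix A assume "A \<in> setpow n S' (Suc k)"
    then obtain A1 A2 where A: "A = A1 * A2" "A1 \<in> S'" "A2 \<in> setpow n S' k" by auto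
    have "A1 * A2 \<in> setpow n S (L + k * L)" using setpow_mult[OF S] A S' Suc by blast
    thus "A \<in> setpow n S (Suc k * L)" using A by simp
  qed
qed simp

declare setpow.simps(2) [simp del]

lemma sym_gens_carrier: "X \<subseteq> carrier_mat n n \<Longrightarrow> sym_gens n X \<subseteq> carrier_mat n n"
  unfolding sym_gens_def inv_set_def by auto

lemma one_mem_sym_gens: "1\<^sub>m n \<in> sym_gens n X"
  unfolding sym_gens_def by auto

lemma sym_gens_mono: "X \<subseteq> X' \<Longrightarrow> sym_gens n X \<subseteq> sym_gens n X'"
  unfolding sym_gens_def inv_set_def by blast

lemma word_len_le: "Y \<subseteq> setpow n (sym_gens n X) k \<Longrightarrow> word_len n X Y \<le> k"
  unfolding word_len_def by (rule Least_le)

lemma subset_setpow_word_len: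
  "Y \<subseteq> setpow n (sym_gens n X) k \<Longrightarrow> Y \<subseteq> setpow n (sym_gens n X) (word_len n X Y)"
  unfolding word_len_def by (rule LeastI)

lemma finite_subset_setpow_sym_gens:
  assumes X: "X \<subseteq> carrier_mat n n" and gen: "generates n J X"
    and Y: "finite Y" "Y \<subseteq> Sp n J"
  shows "\<exists>k. Y \<subseteq> setpow n (sym_gens n X) k"
  using Y
proof (induction Y rule: finite_induct)
  case (insert y Y)
  then obtain k where k: "Y \<subseteq> setpow n (sym_gens n X) k" by auto
  from insert.prems gen obtain k' where k': "y \<in> setpow n (sym_gens n X) k'"
    unfolding generates_def by blast
  have mono: "setpow n (sym_gens n X) m \<subseteq> setpow n (sym_gens n X) (max k k')" if "m \<le> max k k'" for m
    using setpow_mono[OF sym_gens_carrier[OF X] one_mem_sym_gens that] .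
  show ?case using mono[of k] mono[of k'] k k' by (intro exI[of _ "max k k'"]) auto
qed simp

lemma ex_nonzero_add_mult_ne_zero:
  fixes A B :: "'a::field"
  assumes three: "\<And>x y::'a. \<exists>z. z \<noteq> x \<and> z \<noteq> y" and A: "A \<noteq> 0"
  obtains \<mu> where "\<mu> \<noteq> 0" "A + \<mu> * B \<noteq> 0"
proof -
  obtain \<mu> where mu: "\<mu> \<noteq> 0" "\<mu> \<noteq> - A / B" using three by blast
  have "A + \<mu> * B \<noteq> 0"
  proof (cases "B = 0")
    case False
    thus ?thesis using mu(2) by (auto simp: field_simps add_eq_0_iff)
  qed (use A in simp)
  thus ?thesis using mu that by blast
qed

lemma odd_card_ex_ne2:
  assumes "odd (CARD('a::{finite,field}))"
  shows "\<exists>z::'a. z \<noteq> x \<and> z \<noteq> y"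
proof -
  have "card {0::'a, 1} = 2" by simp
  hence "2 \<le> CARD('a)" by (metis card_mono finite subset_UNIV)
  hence "3 \<le> CARD('a)" using assms by presburger
  moreover have "card {x, y} \<le> 2" by (simp add: card_insert_le_m1)
  ultimately have "{x, y} \<noteq> UNIV" by auto
  thus ?thesis by blast
qed

abbreviation vec_span :: "nat \<Rightarrow> 'a::field vec set \<Rightarrow> 'a vec set" where
  "vec_span n \<equiv> module.span class_ring (module_vec TYPE('a) n)"

context vec_space
begin

lemma span_singletonE:
  assumes b: "b \<in> carrier_vec n" and v: "v \<in> span {b}"
  obtains c where "v = c \<cdot>\<^sub>v b"
proof -
  from v obtain a where v: "v = lincomb a {b}" using finite_span[of "{b}"] b by auto
  have "v = a b \<cdot>\<^sub>v b"
  proof (rule eq_vecI)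
    fix i assume "i < dim_vec (a b \<cdot>\<^sub>v b)"
    hence i: "i < n" using b by simp
    show "v $ i = (a b \<cdot>\<^sub>v b) $ i" unfolding v using lincomb_index[OF i, of "{b}" a] b i by simp
  qed (use v b lincomb_closed[of "{b}" a] in auto)
  thus ?thesis using that by blast
qed

lemma span_Un_add:
  assumes f: "finite B1" "finite B2" and d: "B1 \<inter> B2 = {}"
    and c: "B1 \<union> B2 \<subseteq> carrier_vec n" and v: "v \<in> span (B1 \<union> B2)"
  obtains v1 v2 where "v1 \<in> span B1" "v2 \<in> span B2" "v = v1 + v2"
proof -
  from v obtain a where v: "v = lincomb a (B1 \<union> B2)" using finite_span[of "B1 \<union> B2"] f c by auto
  have "v = lincomb a B1 + lincomb a B2" unfolding v using lincomb_union[of B1 B2 a] f c d by auto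
  moreover have "lincomb a B1 \<in> span B1" "lincomb a B2 \<in> span B2"
    using finite_span[of B1] finite_span[of B2] f c by auto
  ultimately show ?thesis using that by blast
qed

lemma span_halves:
  assumes B: "finite B" "B \<subseteq> carrier_vec n" "card B \<le> 2 ^ Suc k" and v: "v \<in> span B"
  obtains B1 B2 v1 v2 where "B1 \<subseteq> B" "finite B1" "card B1 \<le> 2 ^ k" "v1 \<in> span B1"
    "B2 \<subseteq> B" "finite B2" "card B2 \<le> 2 ^ k" "v2 \<in> span B2" "v = v1 + v2"
proof -
  obtain B1 where B1: "B1 \<subseteq> B" "card B1 = card B div 2" "finite B1"
    using obtain_subset_with_card_n[of "card B div 2" B] by auto
  define B2 where "B2 = B - B1"
  have B2: "finite B2" "B2 \<subseteq> B" "card B2 = card B - card B div 2"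
    unfolding B2_def using B1 B card_Diff_subset[OF B1(3) B1(1)] by auto
  have "B = B1 \<union> B2" "B1 \<inter> B2 = {}" unfolding B2_def using B1 by auto
  then obtain v1 v2 where "v1 \<in> span B1" "v2 \<in> span B2" "v = v1 + v2"
    using span_Un_add[OF B1(3) B2(1)] B v by metis
  moreover have "card B1 \<le> 2 ^ k" "card B2 \<le> 2 ^ k" using B1 B2 B by simp_all
  ultimately show ?thesis using that B1 B2 by blast
qed

text \<open>A subset of minimal cardinality is linearly independent, hence has at most \<open>n\<close> elements.\<close>

lemma span_subset_card_le_dim:
  assumes A: "A \<subseteq> carrier_vec n" and u: "u \<in> span A"
  obtains B where "B \<subseteq> A" "finite B" "card B \<le> n" "u \<in> span B"
proof -
  let ?P = "\<lambda>B. B \<subseteq> A \<and> finite B \<and> u \<in> span B"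
  from u obtain a B0 where B0: "u = lincomb a B0" "finite B0" "B0 \<subseteq> A" unfolding span_def by auto
  hence "?P B0" unfolding span_def by auto
  then obtain B where B: "?P B" and min: "\<And>B'. ?P B' \<Longrightarrow> card B \<le> card B'"
    using ex_has_least_nat[of ?P B0 card] by blast
  have Bc: "B \<subseteq> carrier_vec n" using B A by auto
  have "lin_indpt B"
  proof
    assume "lin_dep B"
    then obtain A' c v where A': "finite A'" "A' \<subseteq> B" "lincomb c A' = 0\<^sub>v n" "v \<in> A'" "c v \<noteq> 0"
      unfolding lin_dep_def by auto
    have "v \<in> span (A' - {v})" using lincomb_isolate(2)[of A' c v] A' Bc by auto
    hence "v \<in> span (B - {v})" using span_is_monotone[of "A' - {v}" "B - {v}"] A' by auto
    hence "span (B - {v}) = span ((B - {v}) \<union> {v})" using already_in_span[of "B - {v}" v] Bc by auto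
    also have "(B - {v}) \<union> {v} = B" using A' by auto
    finally have "?P (B - {v})" using B by auto
    hence "card B \<le> card (B - {v})" using min by blast
    moreover have "card (B - {v}) < card B" using A' B by (meson card_Diff1_less subsetD)
    ultimately show False by simp
  qed
  hence "card B \<le> n" using li_le_dim(2)[OF fin_dim Bc] dim_is_n by simp
  thus ?thesis using B that by blast
qed

end

lemma spans_mono:
  fixes S :: "'a::field vec set"
  assumes "spans n S" "S \<subseteq> S'" "S' \<subseteq> carrier_vec n"
  shows "spans n S'"
proof -
  interpret vs: vec_space "TYPE('a)" n .
  show ?thesis
    using assms vs.span_is_monotone[OF assms(2)] vs.span_is_subset2[OF assms(3)]
    unfolding spans_def by auto
qed

lemma diam_le_2_imp_strongly_connected:
  assumes d: "diam_le_2_gamma n Y" and e: "gamma_vertices n Y' = gamma_vertices n Y"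
  shows "strongly_connected_gamma n Y'"
  unfolding strongly_connected_gamma_def e
proof (intro ballI)
  fix s t assume s: "s \<in> gamma_vertices n Y" and t: "t \<in> gamma_vertices n Y"
  let ?R = "{(a, b). a \<in> gamma_vertices n Y \<and> b \<in> gamma_vertices n Y \<and> gamma_edge n a b}"
  from d s t consider "s = t" | "gamma_edge n s t"
    | w where "w \<in> gamma_vertices n Y" "gamma_edge n s w" "gamma_edge n w t"
    unfolding diam_le_2_gamma_def by blast
  thus "(s, t) \<in> ?R\<^sup>*"
  proof cases
    case 3
    hence "(s, w) \<in> ?R" "(w, t) \<in> ?R" using s t by auto
    thus ?thesis by (meson converse_rtrancl_into_rtrancl r_into_rtrancl)
  qed (use s t in auto)
qed

lemma gamma_vertices_Diff_one: "gamma_vertices n (Y - {1\<^sub>m n}) = gamma_vertices n Y"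
  unfolding gamma_vertices_def using is_tv_rep_one_False by blast

section \<open>Symplectic transvections\<close>

locale symplectic_form =
  fixes n :: nat and J :: "'a::field mat"
  assumes alternating: "alternating_form n J" and nondegenerate: "nondegenerate_form n J"
begin

definition \<omega> :: "'a vec \<Rightarrow> 'a vec \<Rightarrow> 'a" where
  "\<omega> a b = a \<bullet> (J *\<^sub>v b)"

definition transv :: "'a vec \<Rightarrow> 'a \<Rightarrow> 'a mat" where
  "transv v t = tv n (t \<cdot>\<^sub>v v) (transpose_mat J *\<^sub>v v)"

lemma J_carrier [simp]: "J \<in> carrier_mat n n"
  using alternating by (simp add: alternating_form_def)

lemma J_dims [simp]: "dim_row J = n" "dim_col J = n"
  using J_carrier unfolding carrier_mat_def by auto

lemma J_mult_vec_carrier [simp]: "v \<in> carrier_vec n \<Longrightarrow> J *\<^sub>v v \<in> carrier_vec n"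
  using mult_mat_vec_carrier[OF J_carrier] by blast

lemma transpose_J_mult_vec_carrier [simp]: "v \<in> carrier_vec n \<Longrightarrow> transpose_mat J *\<^sub>v v \<in> carrier_vec n"
  using mult_mat_vec_carrier[OF transpose_carrier_mat[THEN iffD2, OF J_carrier]] by blast

lemma \<omega>_add_left [simp]:
  "a \<in> carrier_vec n \<Longrightarrow> b \<in> carrier_vec n \<Longrightarrow> c \<in> carrier_vec n \<Longrightarrow> \<omega> (a + b) c = \<omega> a c + \<omega> b c"
  unfolding \<omega>_def by (rule add_scalar_prod_distrib[of _ n]) auto

lemma \<omega>_add_right [simp]:
  "a \<in> carrier_vec n \<Longrightarrow> b \<in> carrier_vec n \<Longrightarrow> c \<in> carrier_vec n \<Longrightarrow> \<omega> a (b + c) = \<omega> a b + \<omega> a c"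
  unfolding \<omega>_def by (simp add: mult_add_distrib_mat_vec[OF J_carrier] scalar_prod_add_distrib[of _ n])

lemma \<omega>_smult_left [simp]: "a \<in> carrier_vec n \<Longrightarrow> b \<in> carrier_vec n \<Longrightarrow> \<omega> (k \<cdot>\<^sub>v a) b = k * \<omega> a b"
  unfolding \<omega>_def by (rule smult_scalar_prod_distrib[of _ n]) auto

lemma \<omega>_smult_right [simp]: "a \<in> carrier_vec n \<Longrightarrow> b \<in> carrier_vec n \<Longrightarrow> \<omega> a (k \<cdot>\<^sub>v b) = k * \<omega> a b"
  unfolding \<omega>_def by (simp add: mult_mat_vec[OF J_carrier] scalar_prod_smult_distrib[of _ n])

lemma \<omega>_self [simp]: "a \<in> carrier_vec n \<Longrightarrow> \<omega> a a = 0"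
  using alternating unfolding alternating_form_def \<omega>_def by auto

lemma \<omega>_skew:
  assumes "a \<in> carrier_vec n" "b \<in> carrier_vec n"
  shows "\<omega> a b = - \<omega> b a"
proof -
  have ab: "a + b \<in> carrier_vec n" using assms by simp
  have "\<omega> (a + b) (a + b) = \<omega> a (a + b) + \<omega> b (a + b)" using \<omega>_add_left[OF assms ab] .
  also have "\<dots> = \<omega> a b + \<omega> b a" using assms by simp
  finally have "0 = \<omega> a b + \<omega> b a" using \<omega>_self[OF ab] by simp
  thus ?thesis by (metis add.commute neg_eq_iff_add_eq_0)
qed

lemma transpose_J_scalar_prod: "v \<in> carrier_vec n \<Longrightarrow> x \<in> carrier_vec n \<Longrightarrow> (transpose_mat J *\<^sub>v v) \<bullet> x = \<omega> v x"
  unfolding \<omega>_def by (rule transpose_vec_mult_scalar) auto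

lemma \<omega>_nondegenerate:
  assumes "v \<in> carrier_vec n" "v \<noteq> 0\<^sub>v n"
  obtains y where "y \<in> carrier_vec n" "\<omega> v y \<noteq> 0"
proof -
  have "\<exists>y\<in>carrier_vec n. \<omega> v y \<noteq> 0"
    using nondegenerate assms unfolding nondegenerate_form_def \<omega>_def by blast
  thus ?thesis using that by blast
qed

lemma transpose_J_mult_vec_nonzero:
  assumes v: "v \<in> carrier_vec n" "v \<noteq> 0\<^sub>v n"
  shows "transpose_mat J *\<^sub>v v \<noteq> 0\<^sub>v n"
proof
  assume z: "transpose_mat J *\<^sub>v v = 0\<^sub>v n"
  obtain y where y: "y \<in> carrier_vec n" "\<omega> v y \<noteq> 0" using \<omega>_nondegenerate[OF v] by blast
  have "\<omega> v y = (transpose_mat J *\<^sub>v v) \<bullet> y" using transpose_J_scalar_prod[OF v(1) y(1)] by simp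
  also have "\<dots> = 0" using z y(1) by simp
  finally show False using y(2) by simp
qed

lemma transv_carrier [simp]: "transv v t \<in> carrier_mat n n"
  by (simp add: transv_def)

lemma transv_dims [simp]: "dim_row (transv v t) = n" "dim_col (transv v t) = n"
  by (simp_all add: transv_def)

lemma transv_mult_vec:
  assumes v: "v \<in> carrier_vec n" and x: "x \<in> carrier_vec n"
  shows "transv v t *\<^sub>v x = x + (t * \<omega> v x) \<cdot>\<^sub>v v"
proof -
  have "transv v t *\<^sub>v x = x + ((transpose_mat J *\<^sub>v v) \<bullet> x) \<cdot>\<^sub>v (t \<cdot>\<^sub>v v)"
    unfolding transv_def by (rule tv_mult_vec) (use v x in auto)
  thus ?thesis using v x by (simp add: transpose_J_scalar_prod smult_smult_assoc mult.commute)
qed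

lemma transv_zero [simp]: "v \<in> carrier_vec n \<Longrightarrow> transv v 0 = 1\<^sub>m n"
  by (rule eq_mat_by_mult_vec) (auto simp: transv_mult_vec intro!: eq_vecI)

lemma transv_add:
  assumes v: "v \<in> carrier_vec n"
  shows "transv v s * transv v t = transv v (s + t)"
proof (rule eq_mat_by_mult_vec)
  fix x :: "'a vec" assume x: "x \<in> carrier_vec n"
  show "(transv v s * transv v t) *\<^sub>v x = transv v (s + t) *\<^sub>v x"
    using v x by (simp add: assoc_mult_mat_vec[of _ n n _ n] mult_carrier_mat[of _ n n _ n] transv_mult_vec)
      (intro eq_vecI, auto simp: algebra_simps)
qed (auto intro!: mult_carrier_mat[of _ n n _ n])

lemma transv_conj:
  assumes v: "v \<in> carrier_vec n" and z: "z \<in> carrier_vec n"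
  shows "transv z r * transv v t * transv z (-r) = transv (v + (r * \<omega> z v) \<cdot>\<^sub>v z) t"
proof (rule eq_mat_by_mult_vec)
  fix x :: "'a vec" assume x: "x \<in> carrier_vec n"
  show "(transv z r * transv v t * transv z (-r)) *\<^sub>v x = transv (v + (r * \<omega> z v) \<cdot>\<^sub>v z) t *\<^sub>v x"
    using v x z by (simp add: assoc_mult_mat_vec[of _ n n _ n] mult_carrier_mat[of _ n n _ n] transv_mult_vec \<omega>_skew[OF v z])
      (intro eq_vecI, auto simp: algebra_simps)
qed (auto intro!: mult_carrier_mat[of _ n n _ n])

lemma transv_in_Sp:
  assumes v: "v \<in> carrier_vec n"
  shows "transv v t \<in> Sp n J"
proof -
  have "invertible_mat (transv v t)"
    unfolding invertible_mat_def inverts_mat_def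
    using transv_add[OF v, of t "-t"] transv_add[OF v, of "-t" t] v
    by (intro conjI exI[of _ "transv v (-t)"]) (auto simp: square_mat.simps)
  moreover have "\<omega> (transv v t *\<^sub>v x) (transv v t *\<^sub>v y) = \<omega> x y"
    if x: "x \<in> carrier_vec n" and y: "y \<in> carrier_vec n" for x y
    using x y v by (simp add: transv_mult_vec \<omega>_skew[OF x v] algebra_simps)
  ultimately show ?thesis unfolding Sp_def by (auto simp: \<omega>_def)
qed

lemma transv_smult:
  assumes v: "v \<in> carrier_vec n"
  shows "transv (\<mu> \<cdot>\<^sub>v v) t = transv v (t * \<mu> * \<mu>)"
proof (rule eq_mat_by_mult_vec)
  fix x :: "'a vec" assume x: "x \<in> carrier_vec n"
  show "transv (\<mu> \<cdot>\<^sub>v v) t *\<^sub>v x = transv v (t * \<mu> * \<mu>) *\<^sub>v x"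
    using v x by (simp add: transv_mult_vec) (intro eq_vecI, auto simp: algebra_simps)
qed auto

lemma T_set_eq_range: "T_set n J v = range (transv v)"
  unfolding T_set_def transv_def by auto

lemma T_set_smult:
  assumes v: "v \<in> carrier_vec n" and \<mu>: "\<mu> \<noteq> 0"
  shows "T_set n J (\<mu> \<cdot>\<^sub>v v) = T_set n J v"
proof -
  have "transv v t = transv (\<mu> \<cdot>\<^sub>v v) (t / (\<mu> * \<mu>))" for t
    using \<mu> by (simp add: transv_smult[OF v])
  hence "transv v t \<in> range (transv (\<mu> \<cdot>\<^sub>v v))" for t by (metis rangeI)
  moreover have "transv (\<mu> \<cdot>\<^sub>v v) t \<in> range (transv v)" for t using transv_smult[OF v] by simp
  ultimately show ?thesis unfolding T_set_eq_range by blast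
qed

lemma T_set_add_parallel:
  assumes a: "a \<in> carrier_vec n" and b: "b = c \<cdot>\<^sub>v a" and ab: "a + b \<noteq> 0\<^sub>v n"
  shows "T_set n J (a + b) = T_set n J a"
proof -
  have sum: "a + b = (1 + c) \<cdot>\<^sub>v a" unfolding b using a by (intro eq_vecI) (auto simp: algebra_simps)
  have "1 + c \<noteq> 0"
  proof
    assume "1 + c = 0"
    hence "a + b = 0\<^sub>v n" unfolding sum using a by (intro eq_vecI) auto
    thus False using ab by contradiction
  qed
  thus ?thesis unfolding sum using T_set_smult[OF a] by simp
qed

lemma T_set_in_Sp: "v \<in> carrier_vec n \<Longrightarrow> T_set n J v \<subseteq> Sp n J"
  unfolding T_set_eq_range using transv_in_Sp by auto

lemma transv_right_inverse:
  assumes v: "v \<in> carrier_vec n" and B: "B \<in> carrier_mat n n" and e: "transv v t * B = 1\<^sub>m n"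
  shows "B = transv v (-t)"
proof -
  have "transv v (-t) = (transv v (-t) * transv v t) * B"
    using e assoc_mult_mat[OF transv_carrier transv_carrier B] by simp
  also have "\<dots> = B" using transv_add[OF v] v B by simp
  finally show ?thesis by simp
qed

lemma is_tv_rep_transv:
  assumes a: "a \<in> carrier_vec n" "a \<noteq> 0\<^sub>v n" and \<sigma>: "\<sigma> \<noteq> 0"
  shows "is_tv_rep n (transv a \<sigma>) (\<sigma> \<cdot>\<^sub>v a) (transpose_mat J *\<^sub>v a)"
proof -
  have "\<sigma> \<cdot>\<^sub>v a \<noteq> 0\<^sub>v n" using smult_vec_eq_zero[OF a(1) \<sigma>] a(2) by blast
  thus ?thesis unfolding is_tv_rep_def transv_def
    using a transpose_J_mult_vec_nonzero[OF a] transpose_J_scalar_prod[OF a(1)] by simp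
qed

lemma is_tv_rep_transvD:
  assumes a: "a \<in> carrier_vec n" and r: "is_tv_rep n (transv a \<sigma>) u phi"
  shows "\<exists>c. u = c \<cdot>\<^sub>v a" "\<exists>d. phi = d \<cdot>\<^sub>v (transpose_mat J *\<^sub>v a)"
proof -
  let ?w = "transpose_mat J *\<^sub>v a"
  from r have u: "u \<in> carrier_vec n" "u \<noteq> 0\<^sub>v n" and p: "phi \<in> carrier_vec n" "phi \<noteq> 0\<^sub>v n"
    and e: "tv n u phi = tv n (\<sigma> \<cdot>\<^sub>v a) ?w" unfolding is_tv_rep_def transv_def by auto
  have entry: "u $ i * phi $ j = \<sigma> * a $ i * ?w $ j" if "i < n" "j < n" for i j
    using tv_eq_imp_index_eq[OF e that] that a by simp
  obtain i0 where i0: "i0 < n" "u $ i0 \<noteq> 0" using vec_nonzero_index[OF u] by blast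
  obtain j0 where j0: "j0 < n" "phi $ j0 \<noteq> 0" using vec_nonzero_index[OF p] by blast
  have "u $ i = (\<sigma> * ?w $ j0 / phi $ j0) * a $ i" if "i < n" for i
    using entry[OF that j0(1)] j0(2) by (simp add: field_simps)
  hence "u = (\<sigma> * ?w $ j0 / phi $ j0) \<cdot>\<^sub>v a" using u a by (intro eq_vecI) auto
  thus "\<exists>c. u = c \<cdot>\<^sub>v a" by blast
  have "phi $ j = (\<sigma> * a $ i0 / u $ i0) * ?w $ j" if "j < n" for j
    using entry[OF i0(1) that] i0(2) by (simp add: field_simps)
  hence "phi = (\<sigma> * a $ i0 / u $ i0) \<cdot>\<^sub>v ?w" using p a by (intro eq_vecI) auto
  thus "\<exists>d. phi = d \<cdot>\<^sub>v ?w" by blast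
qed

lemma gamma_edge_transvD:
  assumes a: "a \<in> carrier_vec n" and b: "b \<in> carrier_vec n"
    and e: "gamma_edge n (transv a \<sigma>) (transv b \<tau>)"
  shows "\<omega> b a \<noteq> 0"
proof -
  from e obtain u phi v psi where r1: "is_tv_rep n (transv a \<sigma>) u phi"
    and r2: "is_tv_rep n (transv b \<tau>) v psi" and ne: "psi \<bullet> u \<noteq> 0"
    unfolding gamma_edge_def by blast
  obtain c where c: "u = c \<cdot>\<^sub>v a" using is_tv_rep_transvD(1)[OF a r1] by blast
  obtain d where d: "psi = d \<cdot>\<^sub>v (transpose_mat J *\<^sub>v b)" using is_tv_rep_transvD(2)[OF b r2] by blast
  have "psi \<bullet> u = d * (c * \<omega> b a)" using a b unfolding c d
    by (simp add: transpose_J_scalar_prod[symmetric] scalar_prod_smult_distrib[of _ n]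
        smult_scalar_prod_distrib[of _ n])
  thus ?thesis using ne by auto
qed

text \<open>A rank-one map \<open>x \<mapsto> x + \<phi>(x) u\<close> preserving \<open>f\<close> forces \<open>\<phi> = \<mu> \<phi>\<^sub>u\<close>: expanding
  \<open>f(s x, s y) = f(x, y)\<close> gives \<open>\<phi>(y) f(x,u) + \<phi>(x) f(u,y) = 0\<close>, and one fixes \<open>x\<close> with \<open>f(u,x) \<noteq> 0\<close>.\<close>

lemma Sp_tv_eq_transv:
  assumes s: "s \<in> Sp n J" and r: "is_tv_rep n s u phi"
  obtains \<mu> where "\<mu> \<noteq> 0" "s = transv u \<mu>"
proof -
  from r have u: "u \<in> carrier_vec n" "u \<noteq> 0\<^sub>v n" and p: "phi \<in> carrier_vec n" "phi \<noteq> 0\<^sub>v n"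
    and e: "s = tv n u phi" unfolding is_tv_rep_def by auto
  have act: "s *\<^sub>v x = x + (phi \<bullet> x) \<cdot>\<^sub>v u" if "x \<in> carrier_vec n" for x
    using e tv_mult_vec[OF u(1) p(1) that] by simp
  have key: "(phi \<bullet> y) * \<omega> x u + (phi \<bullet> x) * \<omega> u y = 0"
    if x: "x \<in> carrier_vec n" and y: "y \<in> carrier_vec n" for x y
  proof -
    have "\<omega> x y = \<omega> (s *\<^sub>v x) (s *\<^sub>v y)" using s x y unfolding Sp_def \<omega>_def by auto
    also have "\<dots> = \<omega> x y + (phi \<bullet> y) * \<omega> x u + (phi \<bullet> x) * \<omega> u y"
      using x y u by (simp add: act algebra_simps)
    finally show ?thesis by simp
  qed
  obtain x0 where x0: "x0 \<in> carrier_vec n" "\<omega> u x0 \<noteq> 0" using \<omega>_nondegenerate[OF u] by blast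
  define \<mu> where "\<mu> = (phi \<bullet> x0) / \<omega> u x0"
  have phi_eq: "phi \<bullet> y = \<mu> * \<omega> u y" if y: "y \<in> carrier_vec n" for y
  proof -
    have "(phi \<bullet> y) * (- \<omega> u x0) + (phi \<bullet> x0) * \<omega> u y = 0"
      using key[OF x0(1) y] \<omega>_skew[OF x0(1) u(1)] by simp
    thus ?thesis unfolding \<mu>_def using x0(2) by (simp add: field_simps)
  qed
  have phi: "phi = \<mu> \<cdot>\<^sub>v (transpose_mat J *\<^sub>v u)"
  proof (rule eq_vecI)
    fix j assume "j < dim_vec (\<mu> \<cdot>\<^sub>v (transpose_mat J *\<^sub>v u))"
    hence j: "j < n" using u by simp
    have "phi $ j = \<mu> * \<omega> u (unit_vec n j)" using phi_eq[of "unit_vec n j"] j p by simp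
    also have "\<dots> = \<mu> * (transpose_mat J *\<^sub>v u) $ j"
      using transpose_J_scalar_prod[OF u(1), of "unit_vec n j"] j by simp
    finally show "phi $ j = (\<mu> \<cdot>\<^sub>v (transpose_mat J *\<^sub>v u)) $ j" using j u by simp
  qed (use p u in simp)
  have "\<mu> \<noteq> 0" using phi p by auto
  moreover have "s = transv u \<mu>"
    unfolding e transv_def phi using u by (intro eq_matI) (auto simp: index_tv)
  ultimately show ?thesis using that by blast
qed

lemma transvectionsE:
  assumes "s \<in> transvections n J"
  obtains u \<mu> where "u \<in> carrier_vec n" "u \<noteq> 0\<^sub>v n" "\<mu> \<noteq> 0" "s = transv u \<mu>"
proof -
  from assms obtain u phi where s: "s \<in> Sp n J" "is_tv_rep n s u phi"
    unfolding transvections_def by blast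
  with Sp_tv_eq_transv obtain \<mu> where "\<mu> \<noteq> 0" "s = transv u \<mu>" by blast
  thus ?thesis using s that unfolding is_tv_rep_def by blast
qed

lemma transv_in_transvections:
  assumes "u \<in> carrier_vec n" "u \<noteq> 0\<^sub>v n" "\<mu> \<noteq> 0"
  shows "transv u \<mu> \<in> transvections n J"
  unfolding transvections_def using transv_in_Sp[OF assms(1)] is_tv_rep_transv[OF assms] by blast

lemma T_set_add_smult:
  assumes S: "S \<subseteq> carrier_mat n n" and z: "z \<in> carrier_vec n" and v: "v \<in> carrier_vec n"
    and \<omega>: "\<omega> z v \<noteq> 0"
    and Tz: "T_set n J z \<subseteq> setpow n S k\<^sub>1" and Tv: "T_set n J v \<subseteq> setpow n S k\<^sub>2"
  shows "T_set n J (v + \<kappa> \<cdot>\<^sub>v z) \<subseteq> setpow n S (k\<^sub>1 + k\<^sub>2 + k\<^sub>1)"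
proof
  fix A assume "A \<in> T_set n J (v + \<kappa> \<cdot>\<^sub>v z)"
  then obtain t where A: "A = transv (v + \<kappa> \<cdot>\<^sub>v z) t" unfolding T_set_eq_range by auto
  define r where "r = \<kappa> / \<omega> z v"
  have "A = transv z r * transv v t * transv z (-r)"
    using transv_conj[OF v z, of r t] \<omega> unfolding A r_def by simp
  moreover have "transv z r \<in> setpow n S k\<^sub>1" "transv z (-r) \<in> setpow n S k\<^sub>1" "transv v t \<in> setpow n S k\<^sub>2"
    using Tz Tv unfolding T_set_eq_range by auto
  ultimately show "A \<in> setpow n S (k\<^sub>1 + k\<^sub>2 + k\<^sub>1)" using setpow_mult[OF S] by metis
qed

section \<open>Admissible generating sets\<close>

lemma admissible_carrier: "admissible n J X \<Longrightarrow> X \<subseteq> carrier_mat n n"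
  unfolding admissible_def Sp_def by blast

lemma T_set_subset_admissible:
  assumes adm: "admissible n J X" and s: "transv u \<mu> \<in> X"
    and u: "u \<in> carrier_vec n" "u \<noteq> 0\<^sub>v n" and \<mu>: "\<mu> \<noteq> 0"
  shows "T_set n J u \<subseteq> X"
proof
  fix A assume "A \<in> T_set n J u"
  then obtain t where A: "A = transv u t" unfolding T_set_eq_range by auto
  show "A \<in> X"
  proof (cases "t = 0")
    case True
    thus ?thesis using A adm u unfolding admissible_def by simp
  next
    case False
    have "is_tv_rep n (transv u \<mu>) (\<mu> \<cdot>\<^sub>v u) (transpose_mat J *\<^sub>v u)"
      using is_tv_rep_transv[OF u \<mu>] .
    hence "tv n ((t / \<mu>) \<cdot>\<^sub>v (\<mu> \<cdot>\<^sub>v u)) (transpose_mat J *\<^sub>v u) \<in> X"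
      using adm s False \<mu> unfolding admissible_def Fq_closed_def by simp
    thus ?thesis using A \<mu> unfolding transv_def by (simp add: smult_smult_assoc)
  qed
qed

lemma V_part_T_set_subset:
  assumes adm: "admissible n J X" and u: "u \<in> V_part n X"
  shows "u \<in> carrier_vec n" "u \<noteq> 0\<^sub>v n" "T_set n J u \<subseteq> X"
proof -
  from u obtain s phi where s: "s \<in> X" "is_tv_rep n s u phi" unfolding V_part_def by blast
  show "u \<in> carrier_vec n" "u \<noteq> 0\<^sub>v n" using s unfolding is_tv_rep_def by auto
  moreover have "s \<in> Sp n J" using adm s(1) unfolding admissible_def by blast
  then obtain \<mu> where "\<mu> \<noteq> 0" "s = transv u \<mu>" using Sp_tv_eq_transv s(2) by blast
  ultimately show "T_set n J u \<subseteq> X" using T_set_subset_admissible[OF adm] s(1) by blast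
qed

text \<open>Apply the diameter hypothesis to \<open>\<Gamma>((X - {1}) \<union> {x\<^sub>u(1), x\<^sub>v(1)})\<close>: there is no edge from
  \<open>x\<^sub>u(1)\<close> to \<open>x\<^sub>v(1)\<close>, so a path of length two passes through an element of \<open>X\<close>.\<close>

lemma admissible_common_neighbour:
  assumes adm: "admissible n J X"
    and u: "u \<in> carrier_vec n" "u \<noteq> 0\<^sub>v n" and v: "v \<in> carrier_vec n" "v \<noteq> 0\<^sub>v n"
    and uv: "\<omega> u v = 0" and indep: "\<nexists>c. v = c \<cdot>\<^sub>v u"
  obtains w where "w \<in> carrier_vec n" "w \<noteq> 0\<^sub>v n" "T_set n J w \<subseteq> X" "\<omega> w u \<noteq> 0" "\<omega> w v \<noteq> 0"
proof -
  define Y where "Y = (X - {1\<^sub>m n}) \<union> {transv u 1, transv v 1}"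
  have Y: "Y \<subseteq> transvections n J"
    using adm transv_in_transvections[OF u, of 1] transv_in_transvections[OF v, of 1]
    unfolding Y_def admissible_def by auto
  hence diam: "diam_le_2_gamma n Y" using adm unfolding admissible_def Y_def by blast
  have vert: "transv u 1 \<in> gamma_vertices n Y" "transv v 1 \<in> gamma_vertices n Y"
    unfolding gamma_vertices_def Y_def using is_tv_rep_transv[OF u one_neq_zero] is_tv_rep_transv[OF v one_neq_zero] by auto
  have "transv u 1 \<noteq> transv v 1"
  proof
    assume "transv u 1 = transv v 1"
    hence "is_tv_rep n (transv u 1) (1 \<cdot>\<^sub>v v) (transpose_mat J *\<^sub>v v)"
      using is_tv_rep_transv[OF v, of 1] by simp
    thus False using is_tv_rep_transvD(1)[OF u(1)] indep by (metis one_smult_vec)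
  qed
  moreover have "\<not> gamma_edge n (transv u 1) (transv v 1)"
    using gamma_edge_transvD[OF u(1) v(1)] \<omega>_skew[OF v(1) u(1)] uv by auto
  ultimately obtain W where W: "W \<in> gamma_vertices n Y"
    "gamma_edge n (transv u 1) W" "gamma_edge n W (transv v 1)"
    using diam vert unfolding diam_le_2_gamma_def by blast
  hence "W \<in> transvections n J" using Y unfolding gamma_vertices_def by blast
  then obtain w \<mu> where w: "w \<in> carrier_vec n" "w \<noteq> 0\<^sub>v n" "\<mu> \<noteq> 0" "W = transv w \<mu>"
    using transvectionsE by blast
  have "\<omega> w u \<noteq> 0" using gamma_edge_transvD[OF u(1) w(1)] W(2) w(4) by blast
  moreover have "\<omega> w v \<noteq> 0"
    using gamma_edge_transvD[OF w(1) v(1)] W(3) w(4) \<omega>_skew[OF v(1) w(1)] by auto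
  moreover have "W \<noteq> transv u 1" "W \<noteq> transv v 1"
    using W(2,3) gamma_edge_transvD[OF u(1) u(1)] gamma_edge_transvD[OF v(1) v(1)] u v by auto
  hence "W \<in> X" using W(1) unfolding Y_def gamma_vertices_def by blast
  hence "T_set n J w \<subseteq> X" using T_set_subset_admissible[OF adm _ w(1,2,3)] w(4) by blast
  ultimately show ?thesis using that w by blast
qed

section \<open>The sum hypothesis with \<open>c = 17\<close>\<close>

text \<open>When \<open>f(a,b) = 0\<close> with pivots \<open>w\<close> (for \<open>a, b\<close>) and \<open>w'\<close> (for \<open>a, a+b\<close>), one passes through
  \<open>z = a + \<mu> w\<close>, \<open>z + b\<close>, \<open>z + b + \<kappa> w'\<close>, \<open>b + \<kappa> w'\<close>, \<open>a + b + \<kappa> w'\<close> and finally \<open>a + b\<close>,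
  each step a commutation; \<open>\<mu>, \<kappa>\<close> are chosen, using \<open>|F| \<ge> 3\<close>, so that every step is legal.\<close>

lemma T_set_add_orthogonal_setpow_17:
  assumes S: "S \<subseteq> carrier_mat n n" and three: "\<And>x y::'a. \<exists>z. z \<noteq> x \<and> z \<noteq> y"
    and vecs: "a \<in> carrier_vec n" "b \<in> carrier_vec n" "w \<in> carrier_vec n" "w' \<in> carrier_vec n"
    and ab: "\<omega> a b = 0" and w: "\<omega> w a \<noteq> 0" "\<omega> w b \<noteq> 0" and w': "\<omega> w' a \<noteq> 0" "\<omega> w' (a + b) \<noteq> 0"
    and T: "T_set n J a \<subseteq> setpow n S 1" "T_set n J b \<subseteq> setpow n S 1"
      "T_set n J w \<subseteq> setpow n S 1" "T_set n J w' \<subseteq> setpow n S 1"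
  shows "T_set n J (a + b) \<subseteq> setpow n S 17"
proof -
  note add = T_set_add_smult[OF S]
  obtain \<mu> where \<mu>: "\<mu> \<noteq> 0" "\<omega> w' (a + b) + \<mu> * \<omega> w' w \<noteq> 0"
    using ex_nonzero_add_mult_ne_zero[OF three w'(2)] by blast
  define z where "z = a + \<mu> \<cdot>\<^sub>v w"
  have z: "z \<in> carrier_vec n" and zb: "\<omega> z b = \<mu> * \<omega> w b"
    unfolding z_def using vecs ab by simp_all
  obtain \<kappa> where \<kappa>: "\<kappa> \<noteq> 0" "\<omega> z b + \<kappa> * \<omega> z w' \<noteq> 0"
    using ex_nonzero_add_mult_ne_zero[OF three, of "\<omega> z b"] zb \<mu> w by auto
  have Tz: "T_set n J z \<subseteq> setpow n S 3"
    using add[where \<kappa> = \<mu>, OF vecs(3,1) w(1) T(3,1)] unfolding z_def by (simp add: numeral_eq_Suc)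
  define y where "y = z + 1 \<cdot>\<^sub>v b"
  have y: "y \<in> carrier_vec n" unfolding y_def using z vecs by simp
  have "\<omega> b z \<noteq> 0" using \<omega>_skew[OF vecs(2) z] zb \<mu> w by simp
  hence Ty: "T_set n J y \<subseteq> setpow n S 5"
    using add[where \<kappa> = 1, OF vecs(2) z _ T(2) Tz] unfolding y_def by (simp add: numeral_eq_Suc)
  define y\<^sub>2 where "y\<^sub>2 = y + \<kappa> \<cdot>\<^sub>v w'"
  have y\<^sub>2: "y\<^sub>2 \<in> carrier_vec n" unfolding y\<^sub>2_def using y vecs by simp
  have "\<omega> w' y = \<omega> w' (a + b) + \<mu> * \<omega> w' w" unfolding y_def z_def using vecs by simp
  hence Ty\<^sub>2: "T_set n J y\<^sub>2 \<subseteq> setpow n S 7"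
    using add[where \<kappa> = \<kappa>, OF vecs(4) y _ T(4) Ty] \<mu> unfolding y\<^sub>2_def by (simp add: numeral_eq_Suc)
  define y\<^sub>3 where "y\<^sub>3 = y\<^sub>2 + (-1) \<cdot>\<^sub>v z"
  have y\<^sub>3: "y\<^sub>3 \<in> carrier_vec n" unfolding y\<^sub>3_def using y\<^sub>2 z by simp
  have "\<omega> z y\<^sub>2 = \<omega> z b + \<kappa> * \<omega> z w'" unfolding y\<^sub>2_def y_def using z vecs by simp
  hence Ty\<^sub>3: "T_set n J y\<^sub>3 \<subseteq> setpow n S 13"
    using add[where \<kappa> = "-1", OF z y\<^sub>2 _ Tz Ty\<^sub>2] \<kappa> unfolding y\<^sub>3_def by (simp add: numeral_eq_Suc)
  define y\<^sub>4 where "y\<^sub>4 = y\<^sub>3 + 1 \<cdot>\<^sub>v a"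
  have y\<^sub>4: "y\<^sub>4 \<in> carrier_vec n" unfolding y\<^sub>4_def using y\<^sub>3 vecs by simp
  have "\<omega> a y\<^sub>3 = - \<kappa> * \<omega> w' a"
    unfolding y\<^sub>3_def y\<^sub>2_def y_def z_def using vecs ab \<omega>_skew[OF vecs(1,4)] by (simp add: algebra_simps)
  hence Ty\<^sub>4: "T_set n J y\<^sub>4 \<subseteq> setpow n S 15"
    using add[where \<kappa> = 1, OF vecs(1) y\<^sub>3 _ T(1) Ty\<^sub>3] \<kappa> w' unfolding y\<^sub>4_def by (simp add: numeral_eq_Suc)
  have "\<omega> w' y\<^sub>4 = \<omega> w' (a + b)"
    unfolding y\<^sub>4_def y\<^sub>3_def y\<^sub>2_def y_def z_def using vecs by (simp add: algebra_simps)
  hence "T_set n J (y\<^sub>4 + (- \<kappa>) \<cdot>\<^sub>v w') \<subseteq> setpow n S 17"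
    using add[where \<kappa> = "- \<kappa>", OF vecs(4) y\<^sub>4 _ T(4) Ty\<^sub>4] w' by (simp add: numeral_eq_Suc)
  moreover have "y\<^sub>4 + (- \<kappa>) \<cdot>\<^sub>v w' = a + b"
    unfolding y\<^sub>4_def y\<^sub>3_def y\<^sub>2_def y_def z_def using vecs by (intro eq_vecI) (auto simp: algebra_simps)
  ultimately show ?thesis by simp
qed

lemma T_set_add_setpow_17:
  assumes adm: "admissible n J X" and three: "\<And>x y::'a. \<exists>z. z \<noteq> x \<and> z \<noteq> y"
    and a: "a \<in> carrier_vec n" "a \<noteq> 0\<^sub>v n" and b: "b \<in> carrier_vec n" "b \<noteq> 0\<^sub>v n"
    and ab: "a + b \<noteq> 0\<^sub>v n" and T: "T_set n J a \<union> T_set n J b \<subseteq> X"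
  shows "T_set n J (a + b) \<subseteq> setpow n (sym_gens n X) 17"
proof -
  let ?S = "sym_gens n X"
  have S: "?S \<subseteq> carrier_mat n n" using sym_gens_carrier[OF admissible_carrier[OF adm]] .
  have X1: "Y \<subseteq> X \<Longrightarrow> Y \<subseteq> setpow n ?S 1" for Y
    using subset_setpow_1[OF S] unfolding sym_gens_def by blast
  have le_17: "setpow n ?S k \<subseteq> setpow n ?S 17" if "k \<le> 17" for k
    using setpow_mono[OF S one_mem_sym_gens that] .
  consider (parallel) c where "b = c \<cdot>\<^sub>v a"
    | (nonorthogonal) "\<omega> a b \<noteq> 0"
    | (orthogonal) "\<nexists>c. b = c \<cdot>\<^sub>v a" "\<omega> a b = 0"
    by blast
  then show ?thesis
  proof cases
    case parallel
    hence "T_set n J (a + b) = T_set n J a" using T_set_add_parallel[OF a(1) _ ab] by blast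
    thus ?thesis using X1 T le_17[of 1] by auto
  next
    case nonorthogonal
    have "T_set n J (b + 1 \<cdot>\<^sub>v a) \<subseteq> setpow n ?S (1 + 1 + 1)"
      using T_set_add_smult[OF S a(1) b(1) nonorthogonal] X1 T by blast
    moreover have "b + 1 \<cdot>\<^sub>v a = a + b" using a b by (intro eq_vecI) auto
    ultimately show ?thesis using le_17[of 3] by (auto simp: numeral_eq_Suc)
  next
    case orthogonal
    obtain w where w: "w \<in> carrier_vec n" "T_set n J w \<subseteq> X" "\<omega> w a \<noteq> 0" "\<omega> w b \<noteq> 0"
      using admissible_common_neighbour[OF adm a b orthogonal(2,1)] by blast
    have indep: "\<nexists>c. a + b = c \<cdot>\<^sub>v a"
      using add_eq_smult_imp_eq_smult[OF a(1) b(1)] orthogonal(1) by blast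
    have "a + b \<in> carrier_vec n" "\<omega> a (a + b) = 0" using a b orthogonal(2) by simp_all
    then obtain w' where w': "w' \<in> carrier_vec n" "T_set n J w' \<subseteq> X"
      "\<omega> w' a \<noteq> 0" "\<omega> w' (a + b) \<noteq> 0"
      using admissible_common_neighbour[OF adm a _ ab _ indep] by blast
    show ?thesis
      using T_set_add_orthogonal_setpow_17[OF S three a(1) b(1) w(1) w'(1) orthogonal(2) w(3,4) w'(3,4)]
        X1 T w(2) w'(2) by blast
  qed
qed

section \<open>From the sum hypothesis to a bound on \<open>\<ell>\<^sub>X\<close>\<close>

lemma T_set_Diff_one_subset_transvections:
  assumes v: "v \<in> carrier_vec n" "v \<noteq> 0\<^sub>v n"
  shows "T_set n J v - {1\<^sub>m n} \<subseteq> transvections n J"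
proof
  fix A assume "A \<in> T_set n J v - {1\<^sub>m n}"
  then obtain t where A: "A = transv v t" "A \<noteq> 1\<^sub>m n" unfolding T_set_eq_range by auto
  hence "t \<noteq> 0" using v by auto
  thus "A \<in> transvections n J" using transv_in_transvections[OF v] A by simp
qed

lemma Fq_closed_Un_T_set:
  assumes fq: "Fq_closed n X" and v: "v \<in> carrier_vec n"
  shows "Fq_closed n (X \<union> T_set n J v)"
  unfolding Fq_closed_def
proof (intro ballI allI impI)
  fix s u phi t assume s: "s \<in> X \<union> T_set n J v" and r: "is_tv_rep n s u phi" and t: "(t::'a) \<noteq> 0"
  show "tv n (t \<cdot>\<^sub>v u) phi \<in> X \<union> T_set n J v"
  proof (cases "s \<in> X")
    case True
    thus ?thesis using fq r t unfolding Fq_closed_def by blast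
  next
    case False
    then obtain \<sigma> where "s = transv v \<sigma>" using s unfolding T_set_eq_range by auto
    hence "tv n u phi = tv n (\<sigma> \<cdot>\<^sub>v v) (transpose_mat J *\<^sub>v v)"
      using r unfolding is_tv_rep_def transv_def by simp
    hence "tv n (t \<cdot>\<^sub>v u) phi = tv n (t \<cdot>\<^sub>v (\<sigma> \<cdot>\<^sub>v v)) (transpose_mat J *\<^sub>v v)"
      by (rule tv_eq_smult_cong) (use r v in \<open>auto simp: is_tv_rep_def\<close>)
    also have "\<dots> = transv v (t * \<sigma>)" unfolding transv_def by (simp add: smult_smult_assoc)
    finally show ?thesis unfolding T_set_eq_range by auto
  qed
qed

lemma generates_mono:
  assumes gen: "generates n J X" and sub: "X \<subseteq> X'"
  shows "generates n J X'"
proof -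
  have "(\<Union>k. setpow n (sym_gens n X) k) \<subseteq> (\<Union>k. setpow n (sym_gens n X') k)"
    using setpow_mono_set[OF sym_gens_mono[OF sub]] by (intro UN_mono) auto
  with gen show ?thesis unfolding generates_def by (rule order_trans)
qed

lemma admissible_Un_T_set:
  assumes adm: "admissible n J X" and v: "v \<in> carrier_vec n" "v \<noteq> 0\<^sub>v n"
  shows "admissible n J (X \<union> T_set n J v)"
proof -
  let ?X' = "X \<union> T_set n J v"
  have A: "4 \<le> n" "alternating_form n J" "nondegenerate_form n J" "X \<subseteq> Sp n J" "1\<^sub>m n \<in> X"
    "X - {1\<^sub>m n} \<subseteq> transvections n J" "generates n J X" "Fq_closed n X"
    "spans n (V_part n X)" "spans n (Vdual_part n X)"
    "\<forall>Y. X - {1\<^sub>m n} \<subseteq> Y \<and> Y \<subseteq> transvections n J \<longrightarrow> diam_le_2_gamma n Y"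
    using adm unfolding admissible_def by blast+
  have trans: "?X' - {1\<^sub>m n} \<subseteq> transvections n J"
    using A(6) T_set_Diff_one_subset_transvections[OF v] by blast
  have diam: "\<forall>Y. ?X' - {1\<^sub>m n} \<subseteq> Y \<and> Y \<subseteq> transvections n J \<longrightarrow> diam_le_2_gamma n Y"
    using A(11) by blast
  have "strongly_connected_gamma n ?X'"
    using diam trans diam_le_2_imp_strongly_connected[OF _ gamma_vertices_Diff_one[symmetric]] by blast
  moreover have "spans n (V_part n ?X')"
    by (rule spans_mono[OF A(9)]) (auto simp: V_part_def is_tv_rep_def)
  moreover have "spans n (Vdual_part n ?X')"
    by (rule spans_mono[OF A(10)]) (auto simp: Vdual_part_def is_tv_rep_def)
  moreover have "generates n J ?X'" using generates_mono[OF A(7)] by blast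
  moreover have "Fq_closed n ?X'" using Fq_closed_Un_T_set[OF A(8) v(1)] .
  moreover have "?X' \<subseteq> Sp n J" using A(4) T_set_in_Sp[OF v(1)] by blast
  moreover have "1\<^sub>m n \<in> ?X'" using A(5) by blast
  ultimately show ?thesis using A(1-3) trans diam unfolding admissible_def by (intro conjI)
qed

lemma inv_set_T_set_subset:
  assumes v: "v \<in> carrier_vec n"
  shows "inv_set n (T_set n J v) \<subseteq> T_set n J v"
  unfolding inv_set_def T_set_eq_range using transv_right_inverse[OF v] by blast

lemma sym_gens_Un_T_set:
  assumes v: "v \<in> carrier_vec n"
  shows "sym_gens n (X \<union> T_set n J v) = sym_gens n X \<union> T_set n J v"
proof -
  have "inv_set n (X \<union> T_set n J v) = inv_set n X \<union> inv_set n (T_set n J v)"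
    unfolding inv_set_def by blast
  thus ?thesis using inv_set_T_set_subset[OF v] unfolding sym_gens_def by blast
qed

text \<open>The multiplicative step: \<open>T\<^bsub>v\<^sub>1+v\<^sub>2\<^esub>\<close> has length at most \<open>c\<close> over \<open>X \<union> T\<^bsub>v\<^sub>1\<^esub> \<union> T\<^bsub>v\<^sub>2\<^esub>\<close>, whose
  symmetrised elements have length at most \<open>L\<close> over \<open>X\<close>.\<close>

lemma T_set_add_setpow_mult:
  assumes adm: "admissible n J X" and fin: "finite (UNIV :: 'a set)" and sh: "sum_hyp TYPE('a) c"
    and v\<^sub>1: "v\<^sub>1 \<in> carrier_vec n" "v\<^sub>1 \<noteq> 0\<^sub>v n" and v\<^sub>2: "v\<^sub>2 \<in> carrier_vec n" "v\<^sub>2 \<noteq> 0\<^sub>v n"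
    and v: "v\<^sub>1 + v\<^sub>2 \<noteq> 0\<^sub>v n"
    and L: "1 \<le> L" "T_set n J v\<^sub>1 \<subseteq> setpow n (sym_gens n X) L" "T_set n J v\<^sub>2 \<subseteq> setpow n (sym_gens n X) L"
  obtains m where "real m \<le> c" "T_set n J (v\<^sub>1 + v\<^sub>2) \<subseteq> setpow n (sym_gens n X) (m * L)"
proof -
  let ?S = "sym_gens n X" and ?T = "T_set n J (v\<^sub>1 + v\<^sub>2)"
  define X' where "X' = X \<union> T_set n J v\<^sub>1 \<union> T_set n J v\<^sub>2"
  have adm': "admissible n J X'"
    unfolding X'_def using admissible_Un_T_set[OF admissible_Un_T_set[OF adm v\<^sub>1] v\<^sub>2] .
  define m where "m = word_len n X' ?T"
  have "real m \<le> c" using sh adm' v\<^sub>1 v\<^sub>2 v unfolding sum_hyp_def m_def X'_def by blast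
  have "finite ?T" unfolding T_set_eq_range using fin by simp
  then obtain k where "?T \<subseteq> setpow n (sym_gens n X') k"
    using finite_subset_setpow_sym_gens[OF admissible_carrier[OF adm']] adm' T_set_in_Sp v\<^sub>1 v\<^sub>2
    unfolding admissible_def by (meson add_carrier_vec)
  hence "?T \<subseteq> setpow n (sym_gens n X') m" unfolding m_def by (rule subset_setpow_word_len)
  moreover have S: "?S \<subseteq> carrier_mat n n" using sym_gens_carrier[OF admissible_carrier[OF adm]] .
  have "sym_gens n X' = ?S \<union> T_set n J v\<^sub>1 \<union> T_set n J v\<^sub>2"
    unfolding X'_def using sym_gens_Un_T_set v\<^sub>1 v\<^sub>2 by simp
  hence "sym_gens n X' \<subseteq> setpow n ?S L"
    using L subset_setpow_1[OF S] setpow_mono[OF S one_mem_sym_gens L(1)] by auto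
  ultimately have "?T \<subseteq> setpow n ?S (m * L)" using setpow_subset_setpow_mult[OF S] by blast
  with \<open>real m \<le> c\<close> show ?thesis using that by blast
qed

lemma T_set_setpow_mono:
  assumes adm: "admissible n J X" and T: "T_set n J v \<subseteq> setpow n (sym_gens n X) K" and K: "K \<le> K'"
  shows "T_set n J v \<subseteq> setpow n (sym_gens n X) K'"
  using T setpow_mono[OF sym_gens_carrier[OF admissible_carrier[OF adm]] one_mem_sym_gens K] by blast

lemma T_set_span_card_le_1:
  assumes adm: "admissible n J X" and B: "finite B" "B \<subseteq> V_part n X" "card B \<le> 1"
    and v: "v \<in> vec_span n B" "v \<noteq> 0\<^sub>v n"
  shows "T_set n J v \<subseteq> setpow n (sym_gens n X) 1"
proof -
  interpret vs: vec_space "TYPE('a)" n .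
  have "\<forall>b\<in>B. \<forall>b'\<in>B. b = b'" using B(1,3) card_le_Suc0_iff_eq by auto
  hence "B = {} \<or> (\<exists>b. B = {b})" by blast
  moreover have "B \<noteq> {}"
  proof
    assume "B = {}"
    hence "v = 0\<^sub>v n" using v(1) vs.span_empty by simp
    thus False using v(2) by contradiction
  qed
  ultimately obtain b where b: "B = {b}" by blast
  hence b': "b \<in> carrier_vec n" "T_set n J b \<subseteq> X" using V_part_T_set_subset[OF adm] B(2) by auto
  obtain \<gamma> where \<gamma>: "v = \<gamma> \<cdot>\<^sub>v b" using vs.span_singletonE[OF b'(1)] v(1) b by blast
  hence "\<gamma> \<noteq> 0" using v(2) b'(1) by auto
  hence "T_set n J v = T_set n J b" using T_set_smult[OF b'(1)] \<gamma> by simp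
  moreover have "X \<subseteq> setpow n (sym_gens n X) 1"
    using subset_setpow_1[OF sym_gens_carrier[OF admissible_carrier[OF adm]]]
    unfolding sym_gens_def by blast
  ultimately show ?thesis using b'(2) by blast
qed

lemma T_set_span_setpow_power:
  assumes adm: "admissible n J X" and fin: "finite (UNIV :: 'a set)" and sh: "sum_hyp TYPE('a) c"
    and c: "1 \<le> c"
  shows "finite B \<Longrightarrow> B \<subseteq> V_part n X \<Longrightarrow> card B \<le> 2 ^ k \<Longrightarrow> v \<in> vec_span n B \<Longrightarrow> v \<noteq> 0\<^sub>v n \<Longrightarrow>
    \<exists>K. real K \<le> c ^ k \<and> T_set n J v \<subseteq> setpow n (sym_gens n X) K"
proof (induction k arbitrary: B v)
  case 0
  thus ?case using T_set_span_card_le_1[OF adm] by (intro exI[of _ 1]) simp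
next
  case (Suc k)
  interpret vs: vec_space "TYPE('a)" n .
  have B: "B \<subseteq> carrier_vec n" using V_part_T_set_subset(1)[OF adm] Suc.prems(2) by blast
  obtain B\<^sub>1 B\<^sub>2 v\<^sub>1 v\<^sub>2 where B\<^sub>1: "B\<^sub>1 \<subseteq> B" "finite B\<^sub>1" "card B\<^sub>1 \<le> 2 ^ k" "v\<^sub>1 \<in> vec_span n B\<^sub>1"
    and B\<^sub>2: "B\<^sub>2 \<subseteq> B" "finite B\<^sub>2" "card B\<^sub>2 \<le> 2 ^ k" "v\<^sub>2 \<in> vec_span n B\<^sub>2" and v: "v = v\<^sub>1 + v\<^sub>2"
    by (rule vs.span_halves[OF Suc.prems(1) B Suc.prems(3,4)])
  have v\<^sub>1: "v\<^sub>1 \<in> carrier_vec n" and v\<^sub>2: "v\<^sub>2 \<in> carrier_vec n"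
    using vs.span_is_subset2[of B\<^sub>1] vs.span_is_subset2[of B\<^sub>2] B\<^sub>1 B\<^sub>2 B by auto
  have IH\<^sub>1: "\<exists>K. real K \<le> c ^ k \<and> T_set n J v\<^sub>1 \<subseteq> setpow n (sym_gens n X) K" if "v\<^sub>1 \<noteq> 0\<^sub>v n"
    using Suc.IH[OF B\<^sub>1(2) _ B\<^sub>1(3,4) that] B\<^sub>1(1) Suc.prems(2) by blast
  have IH\<^sub>2: "\<exists>K. real K \<le> c ^ k \<and> T_set n J v\<^sub>2 \<subseteq> setpow n (sym_gens n X) K" if "v\<^sub>2 \<noteq> 0\<^sub>v n"
    using Suc.IH[OF B\<^sub>2(2) _ B\<^sub>2(3,4) that] B\<^sub>2(1) Suc.prems(2) by blast
  have ck: "1 \<le> c ^ k" "c ^ k \<le> c ^ Suc k" using c by (simp_all add: one_le_power)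
  consider "v\<^sub>1 = 0\<^sub>v n" | "v\<^sub>2 = 0\<^sub>v n" | "v\<^sub>1 \<noteq> 0\<^sub>v n" "v\<^sub>2 \<noteq> 0\<^sub>v n" by blast
  thus ?case
  proof cases
    case 1
    then obtain K where "real K \<le> c ^ k" "T_set n J v \<subseteq> setpow n (sym_gens n X) K"
      using IH\<^sub>2 Suc.prems(5) v v\<^sub>2 by auto
    thus ?thesis using ck(2) by force
  next
    case 2
    then obtain K where "real K \<le> c ^ k" "T_set n J v \<subseteq> setpow n (sym_gens n X) K"
      using IH\<^sub>1 Suc.prems(5) v v\<^sub>1 by auto
    thus ?thesis using ck(2) by force
  next
    case 3
    obtain K\<^sub>1 K\<^sub>2 where K: "real K\<^sub>1 \<le> c ^ k" "T_set n J v\<^sub>1 \<subseteq> setpow n (sym_gens n X) K\<^sub>1"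
      "real K\<^sub>2 \<le> c ^ k" "T_set n J v\<^sub>2 \<subseteq> setpow n (sym_gens n X) K\<^sub>2"
      using IH\<^sub>1 IH\<^sub>2 3 by blast
    define L where "L = max 1 (max K\<^sub>1 K\<^sub>2)"
    have L: "1 \<le> L" "real L \<le> c ^ k" unfolding L_def using K ck by (auto simp: of_nat_max)
    obtain m where m: "real m \<le> c" "T_set n J v \<subseteq> setpow n (sym_gens n X) (m * L)"
      using T_set_add_setpow_mult[OF adm fin sh v\<^sub>1 3(1) v\<^sub>2 3(2), of L] Suc.prems(5) v L(1)
        T_set_setpow_mono[OF adm K(2), of L] T_set_setpow_mono[OF adm K(4), of L]
      unfolding L_def by auto
    have "real (m * L) \<le> c * c ^ k" using m(1) L c by (simp add: mult_mono)
    thus ?thesis using m(2) by (intro exI[of _ "m * L"]) simp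
  qed
qed

lemma word_len_transvections_le_power:
  assumes adm: "admissible n J X" and fin: "finite (UNIV :: 'a set)" and sh: "sum_hyp TYPE('a) c"
    and c: "1 \<le> c" and nk: "n \<le> 2 ^ k"
  shows "real (word_len n X (transvections n J)) \<le> c ^ k"
proof -
  interpret vs: vec_space "TYPE('a)" n .
  have V: "V_part n X \<subseteq> carrier_vec n" using V_part_T_set_subset(1)[OF adm] by blast
  have span: "vec_span n (V_part n X) = carrier_vec n" using adm unfolding admissible_def spans_def by blast
  define K\<^sub>0 where "K\<^sub>0 = nat \<lfloor>c ^ k\<rfloor>"
  have "transvections n J \<subseteq> setpow n (sym_gens n X) K\<^sub>0"
  proof
    fix s assume "s \<in> transvections n J"
    then obtain u \<mu> where u: "u \<in> carrier_vec n" "u \<noteq> 0\<^sub>v n" "s = transv u \<mu>"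
      using transvectionsE by metis
    have "u \<in> vec_span n (V_part n X)" using span u(1) by simp
    then obtain B where B: "B \<subseteq> V_part n X" "finite B" "card B \<le> n" "u \<in> vec_span n B"
      by (rule vs.span_subset_card_le_dim[OF V])
    have "card B \<le> 2 ^ k" using B(3) nk by simp
    then obtain K where K: "real K \<le> c ^ k" "T_set n J u \<subseteq> setpow n (sym_gens n X) K"
      using T_set_span_setpow_power[OF adm fin sh c B(2,1) _ B(4) u(2)] by blast
    have "K \<le> K\<^sub>0" unfolding K\<^sub>0_def using K(1) by (simp add: le_nat_floor)
    thus "s \<in> setpow n (sym_gens n X) K\<^sub>0"
      using T_set_setpow_mono[OF adm K(2)] u(3) unfolding T_set_eq_range by blast
  qed
  hence "real (word_len n X (transvections n J)) \<le> real K\<^sub>0" by (simp add: word_len_le)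
  also have "\<dots> \<le> c ^ k" unfolding K\<^sub>0_def using c by simp
  finally show ?thesis .
qed

end

lemma power_ceiling_log2_le:
  fixes c x :: real
  assumes c: "1 \<le> c" and x: "1 \<le> x"
  shows "c ^ nat \<lceil>log 2 x\<rceil> \<le> c * x powr log 2 c"
proof -
  have "0 \<le> log 2 x" using x by simp
  hence k: "real (nat \<lceil>log 2 x\<rceil>) \<le> log 2 x + 1" by linarith
  have "c ^ nat \<lceil>log 2 x\<rceil> = c powr real (nat \<lceil>log 2 x\<rceil>)" using c by (simp add: powr_realpow)
  also have "\<dots> \<le> c powr (log 2 x + 1)" using c k by (intro powr_mono) auto
  also have "\<dots> = c * c powr log 2 x" using c by (simp add: powr_add)
  also have "c powr log 2 x = x powr log 2 c" using c x by (simp add: powr_def log_def)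
  finally show ?thesis .
qed

lemma le_two_power_ceiling_log2:
  assumes n: "1 \<le> n"
  shows "n \<le> 2 ^ nat \<lceil>log 2 (real n)\<rceil>"
proof -
  have k: "log 2 (real n) \<le> real (nat \<lceil>log 2 (real n)\<rceil>)" using n by linarith
  have "real n = 2 powr log 2 (real n)" using n by simp
  also have "\<dots> \<le> 2 powr real (nat \<lceil>log 2 (real n)\<rceil>)" using k by (intro powr_mono) auto
  also have "\<dots> = 2 ^ nat \<lceil>log 2 (real n)\<rceil>" by (simp add: powr_realpow)
  finally show ?thesis by (metis of_nat_le_iff of_nat_numeral of_nat_power)
qed

lemma log2_17_le: "log 2 (17::real) \<le> 4.4"
proof (rule ccontr)
  assume "\<not> log 2 (17::real) \<le> 4.4"
  hence "2 powr (4.4::real) < 2 powr (log 2 17)" by (intro powr_less_mono) auto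
  hence "(2 powr (4.4::real)) ^ 5 < 17 ^ 5" by (intro power_strict_mono) auto
  moreover have "(2 powr (4.4::real)) ^ 5 = 2 powr (4.4 * 5)"
    by (simp add: powr_realpow[symmetric] powr_powr)
  moreover have "(2::real) powr (4.4 * 5) = 2 ^ 22"
    by (simp add: powr_realpow[symmetric])
  ultimately show False by simp
qed

lemma admissible_symplectic_form: "admissible n J X \<Longrightarrow> symplectic_form n J"
  unfolding admissible_def symplectic_form_def by blast

lemma word_len_transvections_le_powr:
  fixes J :: "'a::{finite, field} mat"
  assumes adm: "admissible n J X" and sh: "sum_hyp TYPE('a) c" and c: "1 \<le> c"
  shows "real (word_len n X (transvections n J)) \<le> c * real n powr log 2 c"
proof -
  interpret symplectic_form n J using admissible_symplectic_form[OF adm] .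
  have n: "1 \<le> n" using adm unfolding admissible_def by simp
  have "real (word_len n X (transvections n J)) \<le> c ^ nat \<lceil>log 2 (real n)\<rceil>"
    using word_len_transvections_le_power[OF adm _ sh c le_two_power_ceiling_log2[OF n]] by simp
  also have "\<dots> \<le> c * real n powr log 2 c" using power_ceiling_log2_le c n by simp
  finally show ?thesis .
qed

lemma sum_hyp_17:
  assumes "odd (CARD('a::{finite, field}))"
  shows "sum_hyp TYPE('a) 17"
  unfolding sum_hyp_def
proof (intro allI impI ballI)
  fix n :: nat and J :: "'a mat" and X a b
  assume adm: "admissible n J X" and a: "a \<in> carrier_vec n" "a \<noteq> 0\<^sub>v n"
    and b: "b \<in> carrier_vec n" "b \<noteq> 0\<^sub>v n" and ab: "a + b \<noteq> 0\<^sub>v n"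
    and T: "T_set n J a \<union> T_set n J b \<subseteq> X"
  have "T_set n J (a + b) \<subseteq> setpow n (sym_gens n X) 17"
    using symplectic_form.T_set_add_setpow_17[OF admissible_symplectic_form[OF adm] adm
        odd_card_ex_ne2[OF assms] a b ab T] .
  thus "real (word_len n X (T_set n J (a + b))) \<le> 17" by (simp add: word_len_le)
qed

theorem theorem4p17:
  fixes J :: "'a::{finite, field} mat" and X :: "'a mat set" and n :: nat
  assumes "odd (CARD('a))" and "CARD('a) \<noteq> 9"
    and "admissible n J X"
  shows "(\<forall>c::real. c \<ge> 1 \<longrightarrow> sum_hyp TYPE('a) c \<longrightarrow>
            real (word_len n X (transvections n J)) \<le> c * real n powr log 2 c)
       \<and> real (word_len n X (transvections n J)) \<le> 21 * real n powr 4.4"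
proof -
  have general: "\<forall>c::real. c \<ge> 1 \<longrightarrow> sum_hyp TYPE('a) c \<longrightarrow>
      real (word_len n X (transvections n J)) \<le> c * real n powr log 2 c"
    using word_len_transvections_le_powr[OF assms(3)] by blast
  have n: "1 \<le> real n" using assms(3) unfolding admissible_def by simp
  have "real (word_len n X (transvections n J)) \<le> 17 * real n powr log 2 17"
    using general sum_hyp_17[OF assms(1)] by simp
  also have "\<dots> \<le> 21 * real n powr 4.4"
    using n log2_17_le by (intro mult_mono powr_mono) auto
  finally show ?thesis using general by blast
qed

end
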